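(* Let $\mathfrak g$ be a complete locally convex complex Lie algebra with a smooth $1$-periodic action $\alpha\colon\mathbb R\to\mathrm{Aut}(\mathfrak g)$ (i.e. $\alpha$ factors through an action of $\mathbb T\cong\mathbb R/\mathbb Z$), and let $D:=\frac{d}{dt}|_{t=0}\alpha_t$ be the corresponding derivation. Then $D$ is admissible.
   Context: A continuous derivation $D$ of a locally convex Lie algebra $\mathfrak g$ is admissible if $D\mathfrak g\subseteq\mathfrak g$ is a closed subspace and the surjections $D\colon\mathfrak g\to D\mathfrak g$ and $q\colon\mathfrak g\to\mathrm{Coker}(D)=\mathfrak g/D\mathfrak g$ admit continuous linear sections $I\colon D\mathfrak g\to\mathfrak g$ and $\sigma\colon\mathrm{Coker}(D)\to\mathfrak g$, so that $\mathfrak g\cong\mathrm{Ker}(D)\oplus ID\mathfrak g$ and $\mathfrak g\cong D\mathfrak g\oplus\sigma q\mathfrak g$ as locally convex spaces. *)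

theory Defs
  imports "HOL-Analysis.Analysis"
begin

definition cvs_structure :: "(complex \<Rightarrow> 'a::real_vector \<Rightarrow> 'a) \<Rightarrow> bool" where
  "cvs_structure cs \<longleftrightarrow>
     (\<forall>c d x. cs (c + d) x = cs c x + cs d x) \<and>
     (\<forall>c x y. cs c (x + y) = cs c x + cs c y) \<and>
     (\<forall>c d x. cs (c * d) x = cs c (cs d x)) \<and>
     (\<forall>r x. cs (complex_of_real r) x = r *\<^sub>R x)"

definition clinear_map :: "(complex \<Rightarrow> 'a::real_vector \<Rightarrow> 'a) \<Rightarrow> ('a \<Rightarrow> 'a) \<Rightarrow> bool" where
  "clinear_map cs f \<longleftrightarrow> (\<forall>x y. f (x + y) = f x + f y) \<and> (\<forall>c x. f (cs c x) = cs c (f x))"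

definition seminorm_on :: "(complex \<Rightarrow> 'a::real_vector \<Rightarrow> 'a) \<Rightarrow> ('a \<Rightarrow> real) \<Rightarrow> bool" where
  "seminorm_on cs p \<longleftrightarrow> (\<forall>x y. p (x + y) \<le> p x + p y) \<and> (\<forall>c x. p (cs c x) = cmod c * p x)"

definition locally_convex :: "(complex \<Rightarrow> 'a::{real_vector,topological_space} \<Rightarrow> 'a) \<Rightarrow> ('a \<Rightarrow> real) set \<Rightarrow> bool" where
  "locally_convex cs P \<longleftrightarrow>
     (\<forall>p\<in>P. seminorm_on cs p) \<and>
     (\<forall>x. x \<noteq> 0 \<longrightarrow> (\<exists>p\<in>P. p x \<noteq> 0)) \<and>
     (\<forall>U. open U \<longleftrightarrow>
        (\<forall>x\<in>U. \<exists>F e. finite F \<and> F \<subseteq> P \<and> e > 0 \<and> {y. \<forall>p\<in>F. p (y - x) < e} \<subseteq> U))"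

text \<open>Completeness: every Cauchy filter (w.r.t. the canonical uniformity of the
  topological vector space) converges.\<close>
definition tvs_complete :: "'a::{real_vector,topological_space} itself \<Rightarrow> bool" where
  "tvs_complete _ \<longleftrightarrow>
     (\<forall>F :: 'a filter. F \<noteq> bot \<longrightarrow>
        (\<forall>U. open U \<and> 0 \<in> U \<longrightarrow> (\<forall>\<^sub>F z in F \<times>\<^sub>F F. fst z - snd z \<in> U)) \<longrightarrow>
        (\<exists>l. F \<le> nhds l))"

definition complex_lie_algebra :: "(complex \<Rightarrow> 'a::real_vector \<Rightarrow> 'a) \<Rightarrow> ('a \<Rightarrow> 'a \<Rightarrow> 'a) \<Rightarrow> bool" where
  "complex_lie_algebra cs b \<longleftrightarrow>
     (\<forall>x. clinear_map cs (b x)) \<and> (\<forall>y. clinear_map cs (\<lambda>x. b x y)) \<and>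
     (\<forall>x. b x x = 0) \<and>
     (\<forall>x y z. b x (b y z) + b y (b z x) + b z (b x y) = 0)"

definition lie_aut :: "(complex \<Rightarrow> 'a::{real_vector,topological_space} \<Rightarrow> 'a) \<Rightarrow> ('a \<Rightarrow> 'a \<Rightarrow> 'a) \<Rightarrow> ('a \<Rightarrow> 'a) \<Rightarrow> bool" where
  "lie_aut cs b f \<longleftrightarrow> clinear_map cs f \<and> bij f \<and> (\<forall>x y. f (b x y) = b (f x) (f y)) \<and>
     continuous_on UNIV f \<and> continuous_on UNIV (inv f)"

definition dir_deriv :: "('a::{real_vector,topological_space} \<Rightarrow> 'b::{real_vector,topological_space}) \<Rightarrow> 'a \<Rightarrow> 'a \<Rightarrow> 'b \<Rightarrow> bool" where
  "dir_deriv f x v L \<longleftrightarrow> ((\<lambda>h::real. (1 / h) *\<^sub>R (f (x + h *\<^sub>R v) - f x)) \<longlongrightarrow> L) (at 0)"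

text \<open>Bastiani smoothness: all iterated directional derivatives
  d^k f(x; v_0,...,v_{k-1}) exist and are jointly continuous in (x, v_0, ..., v_{k-1}).
  The directions are packaged in a sequence vs (only the first k entries are used).\<close>
definition bastiani_smooth :: "('a::{real_vector,topological_space} \<Rightarrow> 'b::{real_vector,topological_space}) \<Rightarrow> bool" where
  "bastiani_smooth f \<longleftrightarrow>
     (\<exists>d :: nat \<Rightarrow> 'a \<Rightarrow> (nat \<Rightarrow> 'a) \<Rightarrow> 'b.
        (\<forall>x vs. d 0 x vs = f x) \<and>
        (\<forall>k x vs. dir_deriv (\<lambda>y. d k y vs) x (vs k) (d (Suc k) x vs)) \<and>
        (\<forall>k x vs ws. (\<forall>i<k. vs i = ws i) \<longrightarrow> d k x vs = d k x ws) \<and>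
        (\<forall>k. continuous_on UNIV (\<lambda>z. d k (fst z) (snd z))))"

definition coset :: "('a::real_vector \<Rightarrow> 'a) \<Rightarrow> 'a \<Rightarrow> 'a set" where
  "coset D x = (\<lambda>y. x + y) ` range D"

text \<open>Quotient topology on Coker(D) = g / D g (cosets).\<close>
definition coker_topology :: "('a::{real_vector,topological_space} \<Rightarrow> 'a) \<Rightarrow> 'a set topology" where
  "coker_topology D =
     topology (\<lambda>S. S \<subseteq> range (coset D) \<and> open {x. coset D x \<in> S})"

definition admissible_derivation ::
  "(complex \<Rightarrow> 'a::{real_vector,topological_space} \<Rightarrow> 'a) \<Rightarrow> ('a \<Rightarrow> 'a \<Rightarrow> 'a) \<Rightarrow> ('a \<Rightarrow> 'a) \<Rightarrow> bool" where
  "admissible_derivation cs b D \<longleftrightarrow>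
     clinear_map cs D \<and> continuous_on UNIV D \<and>
     (\<forall>x y. D (b x y) = b (D x) y + b x (D y)) \<and>
     closed (range D) \<and>
     (\<exists>I. (\<forall>y\<in>range D. \<forall>z\<in>range D. I (y + z) = I y + I z) \<and>
          (\<forall>c. \<forall>y\<in>range D. I (cs c y) = cs c (I y)) \<and>
          continuous_on (range D) I \<and>
          (\<forall>y\<in>range D. D (I y) = y)) \<and>
     (\<exists>\<sigma>. (\<forall>x y. \<sigma> (coset D (x + y)) = \<sigma> (coset D x) + \<sigma> (coset D y)) \<and>
          (\<forall>c x. \<sigma> (coset D (cs c x)) = cs c (\<sigma> (coset D x))) \<and>
          continuous_map (coker_topology D) euclidean \<sigma> \<and>
          (\<forall>x. coset D (\<sigma> (coset D x)) = coset D x))"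

end

theory Submission
  imports Defs
begin

text \<open>Everything comes from averaging over the circle. Since \<open>\<alpha>\<close> is continuous and
  periodic, the family \<open>\<alpha>\<^sub>t\<close> is equicontinuous, so by completeness the Riemann integrals
  \<open>P x = \<integral>\<^sub>0\<^sup>1 \<alpha>\<^sub>t x dt\<close> and \<open>J x = \<integral>\<^sub>0\<^sup>1 t \<alpha>\<^sub>t x dt\<close> exist and are continuous linear maps.
  \<open>P\<close> is invariant under the action, so \<open>D P = 0\<close> and \<open>P D = 0\<close>, while integration by
  parts gives \<open>D J = id - P\<close>. Hence \<open>range D = ker P\<close> is closed, \<open>J\<close> is a continuous
  right inverse of \<open>D\<close> on \<open>range D\<close>, and \<open>P\<close> factors through a continuous linear
  section of \<open>g \<rightarrow> Coker D\<close>.\<close>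

section \<open>Topologies defined by seminorms\<close>

definition seq_limit :: "(nat \<Rightarrow> 'a::topological_space) \<Rightarrow> 'a" where
  "seq_limit u = (THE l. u \<longlonglongrightarrow> l)"

locale seminorm_topology =
  fixes cs :: "complex \<Rightarrow> 'a::{real_vector,topological_space} \<Rightarrow> 'a"
    and P :: "('a \<Rightarrow> real) set"
  assumes cvs: "cvs_structure cs" and locally_convex: "locally_convex cs P"
begin

lemma cs_of_real: "cs (complex_of_real r) x = r *\<^sub>R x"
  using cvs unfolding cvs_structure_def by blast

lemma cs_add: "cs c (x + y) = cs c x + cs c y"
  using cvs unfolding cvs_structure_def by blast

lemma cs_mult: "cs (c * d) x = cs c (cs d x)"
  using cvs unfolding cvs_structure_def by blast

lemma cs_scaleR_commute: "cs c (r *\<^sub>R x) = r *\<^sub>R cs c x"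
proof -
  have "cs c (r *\<^sub>R x) = cs (c * complex_of_real r) x" by (simp only: cs_mult cs_of_real)
  also have "\<dots> = cs (complex_of_real r * c) x" by (simp only: mult.commute)
  also have "\<dots> = r *\<^sub>R cs c x" by (simp only: cs_mult cs_of_real)
  finally show ?thesis .
qed

lemma cs_diff: "cs c (x - y) = cs c x - cs c y"
  using cs_add[of c x "- y"] cs_scaleR_commute[of c "-1" y] by simp

lemma cs_sum: "cs c (\<Sum>i\<in>A. f i) = (\<Sum>i\<in>A. cs c (f i))"
  using cs_scaleR_commute[of c 0 0]
  by (induction A rule: infinite_finite_induct) (simp_all add: cs_add)

lemma seminorm_on_member: "p \<in> P \<Longrightarrow> seminorm_on cs p"
  using conjunct1[OF locally_convex[unfolded locally_convex_def]] by blast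

lemma seminorms_separate: "(\<And>p. p \<in> P \<Longrightarrow> p x = 0) \<Longrightarrow> x = 0"
  using conjunct1[OF conjunct2[OF locally_convex[unfolded locally_convex_def]]] by blast

lemma open_seminorm_iff: "open U \<longleftrightarrow>
    (\<forall>x\<in>U. \<exists>F e. finite F \<and> F \<subseteq> P \<and> e > 0 \<and> {y. \<forall>p\<in>F. p (y - x) < e} \<subseteq> U)"
  using conjunct2[OF conjunct2[OF locally_convex[unfolded locally_convex_def]]] by (rule spec)

lemma seminorm_add: "p \<in> P \<Longrightarrow> p (x + y) \<le> p x + p y"
  using seminorm_on_member unfolding seminorm_on_def by blast

lemma seminorm_cs: "p \<in> P \<Longrightarrow> p (cs c x) = cmod c * p x"
  using seminorm_on_member unfolding seminorm_on_def by blast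

lemma seminorm_scaleR: "p \<in> P \<Longrightarrow> p (r *\<^sub>R x) = \<bar>r\<bar> * p x"
  using seminorm_cs[of p "complex_of_real r" x] by (simp add: cs_of_real)

lemma seminorm_zero: "p \<in> P \<Longrightarrow> p 0 = 0"
  using seminorm_scaleR[of p 0 0] by simp

lemma seminorm_minus: "p \<in> P \<Longrightarrow> p (- x) = p x"
  using seminorm_scaleR[of p "-1" x] by simp

lemma seminorm_nonneg: "p \<in> P \<Longrightarrow> 0 \<le> p x"
  using seminorm_add[of p x "-x"] seminorm_minus[of p x] seminorm_zero[of p] by simp

lemma seminorm_diff_commute: "p \<in> P \<Longrightarrow> p (x - y) = p (y - x)"
  using seminorm_minus[of p "x - y"] by simp

lemma seminorm_diff_triangle: "p \<in> P \<Longrightarrow> p (x - z) \<le> p (x - y) + p (y - z)"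
  using seminorm_add[of p "x - y" "y - z"] by simp

lemma seminorm_sum: "p \<in> P \<Longrightarrow> p (\<Sum>i\<in>A. f i) \<le> (\<Sum>i\<in>A. p (f i))"
proof (induction A rule: infinite_finite_induct)
  case (insert x F)
  then show ?case using seminorm_add[of p "f x" "sum f F"] by simp
qed (simp_all add: seminorm_zero)

lemma seminorm_sum_nonneg: "G \<subseteq> P \<Longrightarrow> 0 \<le> (\<Sum>q\<in>G. q x)"
  using seminorm_nonneg by (intro sum_nonneg) auto

lemma open_seminorm_ball: assumes "p \<in> P" shows "open {y. p (y - x) < e}"
  unfolding open_seminorm_iff
proof
  fix y assume y: "y \<in> {y. p (y - x) < e}"
  have "{z. \<forall>q\<in>{p}. q (z - y) < e - p (y - x)} \<subseteq> {y. p (y - x) < e}"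
  proof
    fix z assume "z \<in> {z. \<forall>q\<in>{p}. q (z - y) < e - p (y - x)}"
    then show "z \<in> {y. p (y - x) < e}"
      using seminorm_diff_triangle[OF assms, of z x y] by simp
  qed
  then show "\<exists>F e'. finite F \<and> F \<subseteq> P \<and> e' > 0 \<and> {z. \<forall>q\<in>F. q (z - y) < e'} \<subseteq> {y. p (y - x) < e}"
    using assms y by (intro exI[of _ "{p}"] exI[of _ "e - p (y - x)"]) auto
qed

lemma open_nonzero: "open (- {0::'a})"
  unfolding open_seminorm_iff
proof
  fix y :: 'a assume "y \<in> - {0}"
  then obtain p where p: "p \<in> P" "p y \<noteq> 0" using seminorms_separate by auto
  have "{z. \<forall>q\<in>{p}. q (z - y) < p y} \<subseteq> - {0}"
    using seminorm_minus[OF p(1), of y] by auto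
  then show "\<exists>F e. finite F \<and> F \<subseteq> P \<and> e > 0 \<and> {z. \<forall>q\<in>F. q (z - y) < e} \<subseteq> - {0}"
    using p seminorm_nonneg[OF p(1), of y] by (intro exI[of _ "{p}"] exI[of _ "p y"]) auto
qed

lemma tendsto_seminorm_iff:
  fixes f :: "'b \<Rightarrow> 'a"
  shows "(f \<longlongrightarrow> l) F \<longleftrightarrow> (\<forall>p\<in>P. \<forall>e>0. eventually (\<lambda>x. p (f x - l) < e) F)"
proof
  assume "(f \<longlongrightarrow> l) F"
  then show "\<forall>p\<in>P. \<forall>e>0. eventually (\<lambda>x. p (f x - l) < e) F"
    using topological_tendstoD[of f l F "{y. p (y - l) < e}" for p e] open_seminorm_ball seminorm_zero
    by fastforce
next
  assume H: "\<forall>p\<in>P. \<forall>e>0. eventually (\<lambda>x. p (f x - l) < e) F"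
  show "(f \<longlongrightarrow> l) F"
  proof (rule topological_tendstoI)
    fix U assume "open U" "l \<in> U"
    then obtain G e where G: "finite G" "G \<subseteq> P" "e > 0" "{y. \<forall>p\<in>G. p (y - l) < e} \<subseteq> U"
      using open_seminorm_iff by meson
    have "eventually (\<lambda>x. \<forall>p\<in>G. p (f x - l) < e) F"
      using G H by (intro eventually_ball_finite) auto
    then show "eventually (\<lambda>x. f x \<in> U) F"
      by (rule eventually_mono) (use G in auto)
  qed
qed

lemma tendsto_seminormD:
  fixes f :: "'b \<Rightarrow> 'a"
  shows "(f \<longlongrightarrow> l) F \<Longrightarrow> p \<in> P \<Longrightarrow> e > 0 \<Longrightarrow> eventually (\<lambda>x. p (f x - l) < e) F"
  using tendsto_seminorm_iff by blast

lemma tendsto_seminormI: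
  fixes f :: "'b \<Rightarrow> 'a"
  assumes "\<And>p e. p \<in> P \<Longrightarrow> e > 0 \<Longrightarrow> eventually (\<lambda>x. p (f x - l) \<le> e) F"
  shows "(f \<longlongrightarrow> l) F"
  unfolding tendsto_seminorm_iff
proof (intro ballI allI impI)
  fix p and e :: real assume "p \<in> P" "e > 0"
  then show "eventually (\<lambda>x. p (f x - l) < e) F"
    using assms[of p "e/2"] by (auto elim: eventually_mono)
qed

lemma tendsto_seminorm_zero:
  fixes f :: "'b \<Rightarrow> 'a"
  assumes "(f \<longlongrightarrow> l) F" "p \<in> P"
  shows "((\<lambda>x. p (f x - l)) \<longlongrightarrow> 0) F"
proof (rule order_tendstoI)
  fix a :: real assume "a < 0"
  then show "eventually (\<lambda>x. a < p (f x - l)) F"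
    using seminorm_nonneg[OF assms(2)] by (intro always_eventually) (auto intro: less_le_trans)
qed (use tendsto_seminormD[OF assms] in blast)

lemma seminorm_limit_le:
  fixes f :: "'b \<Rightarrow> 'a"
  assumes "(f \<longlongrightarrow> l) F" "F \<noteq> bot" "p \<in> P" "eventually (\<lambda>x. p (f x - y) \<le> B) F"
  shows "p (l - y) \<le> B"
proof (rule field_le_epsilon)
  fix e :: real assume "e > 0"
  have "eventually (\<lambda>x. p (f x - l) < e \<and> p (f x - y) \<le> B) F"
    using tendsto_seminormD[OF assms(1,3) \<open>e > 0\<close>] assms(4) by (rule eventually_conj)
  then obtain x where "p (f x - l) < e" "p (f x - y) \<le> B"
    using assms(2) eventually_happens' by blast
  then show "p (l - y) \<le> B + e"
    using seminorm_diff_triangle[OF assms(3), of l y "f x"] seminorm_diff_commute[OF assms(3), of l "f x"]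
    by linarith
qed

text \<open>The topology is Hausdorff, but the type is not known to be a \<open>t2_space\<close>.\<close>
lemma tendsto_unique:
  fixes f :: "'b \<Rightarrow> 'a"
  assumes "(f \<longlongrightarrow> l) F" "(f \<longlongrightarrow> l') F" "F \<noteq> bot"
  shows "l = l'"
proof -
  have "l - l' = 0"
  proof (rule seminorms_separate)
    fix p assume p: "p \<in> P"
    have "p (l - l') \<le> e" if "e > 0" for e
    proof (rule seminorm_limit_le[OF assms(1,3) p])
      show "eventually (\<lambda>x. p (f x - l') \<le> e) F"
        using tendsto_seminormD[OF assms(2) p that] by (rule eventually_mono) simp
    qed
    then show "p (l - l') = 0" using seminorm_nonneg[OF p] by (meson antisym dense not_le)
  qed
  then show ?thesis by simp
qed

lemma tendsto_add:
  fixes f g :: "'b \<Rightarrow> 'a"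
  assumes "(f \<longlongrightarrow> a) F" "(g \<longlongrightarrow> b) F"
  shows "((\<lambda>x. f x + g x) \<longlongrightarrow> a + b) F"
proof (rule tendsto_seminormI)
  fix p and e :: real assume p: "p \<in> P" and e: "e > 0"
  have "eventually (\<lambda>x. p (f x - a) < e/2 \<and> p (g x - b) < e/2) F"
    using e by (intro eventually_conj tendsto_seminormD[OF assms(1) p] tendsto_seminormD[OF assms(2) p]) simp_all
  then show "eventually (\<lambda>x. p (f x + g x - (a + b)) \<le> e) F"
  proof (rule eventually_mono)
    fix x assume "p (f x - a) < e/2 \<and> p (g x - b) < e/2"
    moreover have "f x + g x - (a + b) = (f x - a) + (g x - b)" by simp
    ultimately show "p (f x + g x - (a + b)) \<le> e"
      using seminorm_add[OF p, of "f x - a" "g x - b"] by (simp only:) linarith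
  qed
qed

definition seminorm_bounded :: "('a \<Rightarrow> 'a) \<Rightarrow> bool" where
  "seminorm_bounded T \<longleftrightarrow> (\<forall>p\<in>P. \<exists>G C. finite G \<and> G \<subseteq> P \<and> (\<forall>x. p (T x) \<le> C * (\<Sum>q\<in>G. q x)))"

lemma tendsto_seminorm_bounded:
  fixes T :: "'a \<Rightarrow> 'a" and f :: "'b \<Rightarrow> 'a"
  assumes add: "\<And>x y. T (x + y) = T x + T y" and bd: "seminorm_bounded T"
    and f: "(f \<longlongrightarrow> a) F"
  shows "((\<lambda>x. T (f x)) \<longlongrightarrow> T a) F"
proof (rule tendsto_seminormI)
  fix p and e :: real assume p: "p \<in> P" and e: "e > 0"
  obtain G C where G: "finite G" "G \<subseteq> P" "\<And>x. p (T x) \<le> C * (\<Sum>q\<in>G. q x)"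
    using bd p unfolding seminorm_bounded_def by (meson bspec)
  define C' where "C' = \<bar>C\<bar> + 1"
  define n where "n = real (card G)"
  have pos: "C' > 0" "n + 1 > 0" unfolding C'_def n_def by simp_all
  define d where "d = e / (C' * (n + 1))"
  have d: "d > 0" using e pos unfolding d_def by simp
  have "eventually (\<lambda>x. \<forall>q\<in>G. q (f x - a) < d) F"
    using G tendsto_seminormD[OF f _ d] by (intro eventually_ball_finite) auto
  then show "eventually (\<lambda>x. p (T (f x) - T a) \<le> e) F"
  proof (rule eventually_mono)
    fix x assume H: "\<forall>q\<in>G. q (f x - a) < d"
    have "T (f x) - T a = T (f x - a)"
      using add[of "f x - a" a] by simp
    have "(\<Sum>q\<in>G. q (f x - a)) \<le> (\<Sum>q\<in>G. d)"
      using H by (intro sum_mono) (simp add: less_imp_le)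
    then have S: "(\<Sum>q\<in>G. q (f x - a)) \<le> n * d" unfolding n_def by simp
    have "p (T (f x - a)) \<le> C * (\<Sum>q\<in>G. q (f x - a))" by (rule G(3))
    also have "\<dots> \<le> C' * (n * d)"
      using S seminorm_sum_nonneg[OF G(2)] pos by (intro mult_mono) (auto simp: C'_def)
    also have "\<dots> = e * (n / (n + 1))"
      unfolding d_def using pos by (simp add: divide_simps)
    also have "\<dots> \<le> e * 1"
      using e pos by (intro mult_left_mono) auto
    finally show "p (T (f x) - T a) \<le> e" using \<open>T (f x) - T a = T (f x - a)\<close> by simp
  qed
qed

lemma continuous_on_seminorm_bounded:
  assumes "\<And>x y. T (x + y) = T x + T y" "seminorm_bounded T"
  shows "continuous_on UNIV T"
  unfolding continuous_on_def
  using tendsto_seminorm_bounded[OF assms tendsto_ident_at] by blast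

lemma seminorm_bounded_scaleR: "seminorm_bounded (\<lambda>x. r *\<^sub>R x)"
  unfolding seminorm_bounded_def
  by (intro ballI exI[of _ "{_}"] exI[of _ "\<bar>r\<bar>"]) (auto simp: seminorm_scaleR)

lemma seminorm_bounded_cs: "seminorm_bounded (cs c)"
  unfolding seminorm_bounded_def
  by (intro ballI exI[of _ "{_}"] exI[of _ "cmod c"]) (auto simp: seminorm_cs)

lemma tendsto_scaleR_const:
  fixes f :: "'b \<Rightarrow> 'a"
  shows "(f \<longlongrightarrow> a) F \<Longrightarrow> ((\<lambda>x. r *\<^sub>R f x) \<longlongrightarrow> r *\<^sub>R a) F"
  by (rule tendsto_seminorm_bounded[OF _ seminorm_bounded_scaleR]) (simp add: scaleR_add_right)

lemma tendsto_cs: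
  fixes f :: "'b \<Rightarrow> 'a"
  shows "(f \<longlongrightarrow> a) F \<Longrightarrow> ((\<lambda>x. cs c (f x)) \<longlongrightarrow> cs c a) F"
  by (rule tendsto_seminorm_bounded[OF cs_add seminorm_bounded_cs])

lemma tendsto_diff:
  fixes f g :: "'b \<Rightarrow> 'a"
  shows "(f \<longlongrightarrow> a) F \<Longrightarrow> (g \<longlongrightarrow> b) F \<Longrightarrow> ((\<lambda>x. f x - g x) \<longlongrightarrow> a - b) F"
  using tendsto_add[of f a F "\<lambda>x. - g x" "- b"] tendsto_scaleR_const[of g b F "-1"] by simp

text \<open>The factor 2 leaves room to rescale \<open>y\<close> strictly into the \<open>G\<close>-ball.\<close>
lemma seminorm_bound_of_ball:
  assumes ball: "\<And>y. (\<forall>q\<in>G. q y < e) \<Longrightarrow> p (T y) < 1"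
    and e: "e > 0" and G: "finite G" "G \<subseteq> P" and p: "p \<in> P"
    and hom: "\<And>r y. T (r *\<^sub>R y) = r *\<^sub>R T y"
  shows "p (T y) \<le> (2 / e) * (\<Sum>q\<in>G. q y)"
proof -
  define S where "S = (\<Sum>q\<in>G. q y)"
  have qS: "q y \<le> S" if "q \<in> G" for q
    unfolding S_def using G that seminorm_nonneg by (intro member_le_sum) auto
  have scaled: "r * p (T y) < 1" if r: "r > 0" "r * S < e" for r
  proof -
    have "q (r *\<^sub>R y) < e" if q: "q \<in> G" for q
    proof -
      have "q (r *\<^sub>R y) = r * q y" using q G r by (simp add: seminorm_scaleR subsetD)
      also have "\<dots> \<le> r * S" using qS[OF q] r by (intro mult_left_mono) auto
      finally show ?thesis using r by simp
    qed
    then have "p (T (r *\<^sub>R y)) < 1" by (intro ball) blast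
    then show ?thesis using r p by (simp add: hom seminorm_scaleR)
  qed
  show ?thesis
  proof (cases "S > 0")
    case True
    have "(e / (2 * S)) * p (T y) < 1"
      using scaled[of "e / (2 * S)"] True e by (simp add: field_simps)
    then show ?thesis unfolding S_def[symmetric] using True e by (simp add: field_simps)
  next
    case False
    then have "S = 0" using seminorm_sum_nonneg[OF G(2)] unfolding S_def by (meson not_le order_antisym)
    have "p (T y) \<le> 0"
    proof (rule ccontr)
      assume "\<not> p (T y) \<le> 0"
      then show False using scaled[of "1 / p (T y)"] \<open>S = 0\<close> e by simp
    qed
    then show ?thesis using \<open>S = 0\<close> unfolding S_def by simp
  qed
qed

lemma seq_limit_eq:
  fixes u :: "nat \<Rightarrow> 'a"
  shows "u \<longlonglongrightarrow> l \<Longrightarrow> seq_limit u = l"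
  unfolding seq_limit_def using tendsto_unique[of u _ sequentially] by (intro the_equality) auto

lemma tendsto_seq_limit:
  fixes u :: "nat \<Rightarrow> 'a"
  shows "\<exists>l. u \<longlonglongrightarrow> l \<Longrightarrow> u \<longlonglongrightarrow> seq_limit u"
  using seq_limit_eq by auto

end

section \<open>Completeness and Riemann sums\<close>

definition riemann_sum :: "(real \<Rightarrow> 'a::real_vector) \<Rightarrow> nat \<Rightarrow> 'a" where
  "riemann_sum g M = (1 / real M) *\<^sub>R (\<Sum>k<M. g (real k / real M))"

lemma sum_lessThan_mult:
  fixes f :: "nat \<Rightarrow> 'b::comm_monoid_add"
  shows "(\<Sum>i<M * K. f i) = (\<Sum>k<M. \<Sum>j<K. f (k * K + j))"
  by (subst sum.nat_group[of f K M, symmetric])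
    (simp add: sum.atLeastLessThan_shift_0 atLeast0LessThan comp_def)

context seminorm_topology
begin

text \<open>Refining the partition from \<open>M\<close> to \<open>M * K\<close> intervals moves each sample point by less
  than the mesh \<open>1 / M\<close>.\<close>
lemma seminorm_riemann_sum_refine:
  assumes p: "p \<in> P" and M: "M > 0" and K: "K > 0"
    and ucont: "\<And>s t. s \<in> {0..1} \<Longrightarrow> t \<in> {0..1} \<Longrightarrow> \<bar>s - t\<bar> < d \<Longrightarrow> p (g s - g t) \<le> e"
    and mesh: "1 / real M < d"
  shows "p (riemann_sum g M - riemann_sum g (M * K)) \<le> e"
proof -
  define c where "c = 1 / (real M * real K)"
  have c: "c > 0" unfolding c_def using M K by simp
  define h where "h k j = g (real k / real M) - g (real (k * K + j) / real (M * K))" for k j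
  have "(\<Sum>k<M. \<Sum>j<K. g (real k / real M)) = real K *\<^sub>R (\<Sum>k<M. g (real k / real M))"
    by (simp add: scaleR_sum_right sum_constant_scaleR)
  then have "riemann_sum g M = c *\<^sub>R (\<Sum>k<M. \<Sum>j<K. g (real k / real M))"
    unfolding riemann_sum_def c_def using K by simp
  moreover have "riemann_sum g (M * K) = c *\<^sub>R (\<Sum>k<M. \<Sum>j<K. g (real (k * K + j) / real (M * K)))"
    unfolding riemann_sum_def c_def sum_lessThan_mult by simp
  ultimately have diff: "riemann_sum g M - riemann_sum g (M * K) = c *\<^sub>R (\<Sum>k<M. \<Sum>j<K. h k j)"
    unfolding h_def by (simp add: sum_subtractf scaleR_diff_right)
  have h: "p (h k j) \<le> e" if kj: "k < M" "j < K" for k j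
    unfolding h_def
  proof (rule ucont)
    have "k * K + j < Suc k * K" using kj by simp
    also have "\<dots> \<le> M * K" using kj by (intro mult_right_mono) auto
    finally have "real (k * K + j) < real (M * K)" by linarith
    then show "real (k * K + j) / real (M * K) \<in> {0..1}" "real k / real M \<in> {0..1}"
      using kj M K by (auto simp: field_simps)
    have "\<bar>real k / real M - real (k * K + j) / real (M * K)\<bar> = real j / (real M * real K)"
      using M K by (simp add: field_simps)
    also have "\<dots> < real K / (real M * real K)" using kj M by (intro divide_strict_right_mono) auto
    also have "\<dots> < d" using K mesh by simp
    finally show "\<bar>real k / real M - real (k * K + j) / real (M * K)\<bar> < d" .
  qed
  have "p (\<Sum>k<M. \<Sum>j<K. h k j) \<le> (\<Sum>k<M. \<Sum>j<K. p (h k j))"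
    by (rule order_trans[OF seminorm_sum[OF p] sum_mono[OF seminorm_sum[OF p]]])
  then have "p (riemann_sum g M - riemann_sum g (M * K)) \<le> c * (\<Sum>k<M. \<Sum>j<K. p (h k j))"
    unfolding diff seminorm_scaleR[OF p] abs_of_pos[OF c] using c by (intro mult_left_mono) auto
  also have "\<dots> \<le> c * (\<Sum>k<M. \<Sum>j<K. e)"
    using c h by (intro mult_left_mono sum_mono) auto
  also have "\<dots> = e" unfolding c_def using M K by simp
  finally show ?thesis .
qed

end

locale complete_seminorm_topology = seminorm_topology +
  assumes complete: "tvs_complete TYPE('a)"
begin

lemma cauchy_convergent:
  fixes u :: "nat \<Rightarrow> 'a"
  assumes cauchy: "\<forall>p\<in>P. \<forall>e>0. \<exists>N. \<forall>m\<ge>N. \<forall>n\<ge>N. p (u m - u n) < e"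
  shows "\<exists>l. u \<longlonglongrightarrow> l"
proof -
  define F where "F = filtermap u sequentially"
  have F_ne: "F \<noteq> bot" unfolding F_def by (simp add: filtermap_bot_iff)
  have FF: "F \<times>\<^sub>F F = filtermap (\<lambda>z. (u (fst z), u (snd z))) (sequentially \<times>\<^sub>F sequentially)"
    unfolding F_def prod_filtermap1 prod_filtermap2 filtermap_filtermap
    by (simp add: apfst_def apsnd_def map_prod_def case_prod_beta)
  have "\<forall>\<^sub>F z in F \<times>\<^sub>F F. fst z - snd z \<in> U" if U: "open U" "0 \<in> U" for U
  proof -
    obtain G e where G: "finite G" "G \<subseteq> P" "e > 0" "{y. \<forall>p\<in>G. p (y - 0) < e} \<subseteq> U"
      using U open_seminorm_iff by meson
    have "eventually (\<lambda>z. q (u (fst z) - u (snd z)) < e) (sequentially \<times>\<^sub>F sequentially)"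
      if q: "q \<in> G" for q
    proof -
      obtain N where "\<forall>m\<ge>N. \<forall>n\<ge>N. q (u m - u n) < e"
        using cauchy G(2,3) q by blast
      then show ?thesis unfolding eventually_prod_sequentially by auto
    qed
    then have "eventually (\<lambda>z. \<forall>q\<in>G. q (u (fst z) - u (snd z)) < e) (sequentially \<times>\<^sub>F sequentially)"
      using G(1) by (intro eventually_ball_finite) auto
    then show ?thesis
      unfolding FF eventually_filtermap by (rule eventually_mono) (use G in auto)
  qed
  then obtain l where "F \<le> nhds l"
    using complete[unfolded tvs_complete_def, rule_format, OF F_ne] by blast
  then show ?thesis unfolding F_def filterlim_def by blast
qed

lemma riemann_sum_convergent:
  assumes ucont: "\<And>p e. p \<in> P \<Longrightarrow> e > 0 \<Longrightarrow>
    \<exists>d>0. \<forall>s\<in>{0..1}. \<forall>t\<in>{0..1}. \<bar>s - t\<bar> < d \<longrightarrow> p (g s - g t) < e"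
  shows "\<exists>l. riemann_sum g \<longlonglongrightarrow> l"
proof (rule cauchy_convergent, intro ballI allI impI)
  fix p and e :: real assume p: "p \<in> P" and e: "e > 0"
  obtain d where d: "d > 0" "\<forall>s\<in>{0..1}. \<forall>t\<in>{0..1}. \<bar>s - t\<bar> < d \<longrightarrow> p (g s - g t) < e / 3"
    using ucont[OF p, of "e / 3"] e by auto
  have ucont_d: "p (g s - g t) \<le> e / 3" if "s \<in> {0..1}" "t \<in> {0..1}" "\<bar>s - t\<bar> < d" for s t
    using d(2) that by (meson less_imp_le)
  obtain N :: nat where N: "1 / d < real N" using reals_Archimedean2 by blast
  have N_pos: "N > 0" using N d by (cases N) (auto simp: field_simps)
  have mesh: "1 / real k < d" if "N \<le> k" for k
  proof -
    have "1 / d < real k" "real k > 0" using N N_pos that by auto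
    then show ?thesis using d by (simp add: field_simps)
  qed
  show "\<exists>N. \<forall>m\<ge>N. \<forall>n\<ge>N. p (riemann_sum g m - riemann_sum g n) < e"
  proof (intro exI[of _ N] allI impI)
    fix m n assume mn: "N \<le> m" "N \<le> n"
    have "p (riemann_sum g m - riemann_sum g (m * n)) \<le> e / 3"
      using seminorm_riemann_sum_refine[OF p _ _ ucont_d mesh[OF mn(1)]] mn N_pos by auto
    moreover have "p (riemann_sum g n - riemann_sum g (n * m)) \<le> e / 3"
      using seminorm_riemann_sum_refine[OF p _ _ ucont_d mesh[OF mn(2)]] mn N_pos by auto
    moreover have "p (riemann_sum g m - riemann_sum g n)
        \<le> p (riemann_sum g m - riemann_sum g (m * n)) + p (riemann_sum g n - riemann_sum g (n * m))"
      using seminorm_diff_triangle[OF p, of "riemann_sum g m" "riemann_sum g n" "riemann_sum g (m * n)"]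
        seminorm_diff_commute[OF p, of "riemann_sum g (m * n)" "riemann_sum g n"]
      by (simp add: mult.commute)
    ultimately show "p (riemann_sum g m - riemann_sum g n) < e" using e by linarith
  qed
qed

end

section \<open>Averages over a periodic action\<close>

definition weight :: "(real \<Rightarrow> real) \<Rightarrow> bool" where
  "weight w \<longleftrightarrow> (\<forall>t\<in>{0..1}. \<bar>w t\<bar> \<le> 1) \<and> uniformly_continuous_on {0..1} w"

lemma weight_const: "weight (\<lambda>_. 1)"
  unfolding weight_def by (simp add: uniformly_continuous_on_const)

lemma weight_id: "weight (\<lambda>t. t)"
  unfolding weight_def by (simp add: uniformly_continuous_on_id)

locale periodic_action = complete_seminorm_topology cs P
  for cs :: "complex \<Rightarrow> 'a::{real_vector,topological_space} \<Rightarrow> 'a" and P +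
  fixes \<alpha> :: "real \<Rightarrow> 'a \<Rightarrow> 'a"
  assumes action_add: "\<alpha> t (x + y) = \<alpha> t x + \<alpha> t y"
    and action_cs: "\<alpha> t (cs c x) = cs c (\<alpha> t x)"
    and action_0: "\<alpha> 0 = id"
    and action_plus: "\<alpha> (s + t) = \<alpha> s \<circ> \<alpha> t"
    and action_periodic: "\<alpha> (t + 1) = \<alpha> t"
    and continuous_action: "continuous_on UNIV (\<lambda>z. \<alpha> (fst z) (snd z))"
begin

lemma action_scaleR: "\<alpha> t (r *\<^sub>R x) = r *\<^sub>R \<alpha> t x"
  using action_cs[of t "complex_of_real r" x] by (simp only: cs_of_real)

lemma action_zero: "\<alpha> t 0 = 0"
  using action_scaleR[of t 0 0] by simp

lemma action_diff: "\<alpha> t (x - y) = \<alpha> t x - \<alpha> t y"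
  using action_add[of t x "- y"] action_scaleR[of t "-1" y] by simp

lemma action_sum: "\<alpha> t (\<Sum>i\<in>A. f i) = (\<Sum>i\<in>A. \<alpha> t (f i))"
  by (induction A rule: infinite_finite_induct) (auto simp: action_zero action_add)

lemma action_action: "\<alpha> s (\<alpha> t x) = \<alpha> (s + t) x"
  by (simp add: action_plus)

lemma action_commute: "\<alpha> s (\<alpha> t x) = \<alpha> t (\<alpha> s x)"
  by (simp add: action_action add.commute)

lemma action_periodic_int: "\<alpha> (t + of_int n) = \<alpha> t"
proof (induction n rule: int_induct[where k = 0])
  case (step2 i)
  then show ?case by (metis action_periodic diff_add_cancel of_int_diff of_int_1 add_diff_eq)
qed (simp_all add: action_periodic flip: add.assoc)

lemma tendsto_orbit_0: "((\<lambda>h. \<alpha> h x) \<longlongrightarrow> x) (at 0)"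
proof -
  have "continuous_on UNIV (\<lambda>h. \<alpha> h x)"
    using continuous_on_compose[OF continuous_on_Pair[OF continuous_on_id continuous_on_const]
        continuous_on_subset[OF continuous_action]] by (simp add: comp_def)
  then have "((\<lambda>h. \<alpha> h x) \<longlongrightarrow> \<alpha> 0 x) (at 0)"
    by (simp add: continuous_on_def)
  then show ?thesis by (simp add: action_0)
qed

text \<open>By the tube lemma, a neighbourhood of \<open>0\<close> is mapped into the unit \<open>p\<close>-ball by all
  \<open>\<alpha> s\<close>, \<open>s \<in> {0..1}\<close>, and by periodicity then by all \<open>\<alpha> s\<close>.\<close>
lemma action_maps_ball:
  assumes p: "p \<in> P"
  obtains G e where "finite G" "G \<subseteq> P" "e > 0" "\<And>s y. \<forall>q\<in>G. q y < e \<Longrightarrow> p (\<alpha> s y) < 1"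
proof -
  define V where "V = (\<lambda>z. \<alpha> (snd z) (fst z)) -` {y. p (y - 0) < 1}"
  have "continuous_on UNIV (\<lambda>z. \<alpha> (snd z) (fst z))"
    using continuous_on_compose[OF continuous_on_swap continuous_on_subset[OF continuous_action]]
    by (simp add: comp_def)
  then have V: "open V"
    unfolding V_def by (rule open_vimage[OF open_seminorm_ball[OF p]])
  have "{0} \<times> {0..1} \<subseteq> V"
    unfolding V_def by (auto simp: action_zero seminorm_zero[OF p])
  then obtain X where X: "0 \<in> X" "open X" "X \<times> {0..1} \<subseteq> V"
    by (metis Elementary_Topology.tube_lemma[OF compact_Icc V])
  obtain G e where G: "finite G" "G \<subseteq> P" "e > 0" "{y. \<forall>q\<in>G. q (y - 0) < e} \<subseteq> X"
    using bspec[OF X(2)[unfolded open_seminorm_iff] X(1)] by blast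
  show ?thesis
  proof (rule that[OF G(1-3)])
    fix s :: real and y assume y: "\<forall>q\<in>G. q y < e"
    have "frac s \<in> {0..1}"
      by (simp add: frac_ge_0 less_imp_le[OF frac_lt_1])
    moreover have "y \<in> X" using G(4) y by auto
    ultimately have "(y, frac s) \<in> V" using X(3) by blast
    moreover have "\<alpha> s = \<alpha> (frac s)"
      using action_periodic_int[of "frac s" "\<lfloor>s\<rfloor>"] by (simp add: frac_def)
    ultimately show "p (\<alpha> s y) < 1" unfolding V_def by simp
  qed
qed

lemma action_equicontinuous:
  assumes p: "p \<in> P"
  obtains G C where "finite G" "G \<subseteq> P" "C \<ge> 0" "\<And>t x. p (\<alpha> t x) \<le> C * (\<Sum>q\<in>G. q x)"
proof -
  obtain G e where G: "finite G" "G \<subseteq> P" "e > 0" "\<And>s y. \<forall>q\<in>G. q y < e \<Longrightarrow> p (\<alpha> s y) < 1"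
    using action_maps_ball[OF p] by blast
  have "p (\<alpha> t x) \<le> (2 / e) * (\<Sum>q\<in>G. q x)" for t x
    using G by (intro seminorm_bound_of_ball[of G e p "\<alpha> t"] p) (auto simp: action_scaleR)
  then show ?thesis using G(1-3) by (intro that[of G "2 / e"]) auto
qed

lemma seminorm_bounded_action: "seminorm_bounded (\<alpha> t)"
  unfolding seminorm_bounded_def by (metis action_equicontinuous)

lemma tendsto_action:
  fixes f :: "'b \<Rightarrow> 'a"
  shows "(f \<longlongrightarrow> l) F \<Longrightarrow> ((\<lambda>x. \<alpha> t (f x)) \<longlongrightarrow> \<alpha> t l) F"
  by (rule tendsto_seminorm_bounded[OF action_add seminorm_bounded_action])

lemma orbit_bounded:
  assumes p: "p \<in> P"
  obtains B where "B \<ge> 0" "\<And>t. p (\<alpha> t x) \<le> B"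
proof -
  obtain G C where "finite G" "G \<subseteq> P" "C \<ge> 0" "\<And>t x. p (\<alpha> t x) \<le> C * (\<Sum>q\<in>G. q x)"
    using action_equicontinuous[OF p] by blast
  then show ?thesis
    using seminorm_sum_nonneg by (intro that[of "C * (\<Sum>q\<in>G. q x)"]) auto
qed

text \<open>Equicontinuity reduces uniform continuity of an orbit to its continuity at \<open>0\<close>,
  via \<open>\<alpha> s x - \<alpha> t x = \<alpha> t (\<alpha> (s - t) x - x)\<close>.\<close>
lemma orbit_uniformly_continuous:
  assumes p: "p \<in> P" and e: "e > 0"
  obtains d :: real where "d > 0" "\<And>s t. \<bar>s - t\<bar> < d \<Longrightarrow> p (\<alpha> s x - \<alpha> t x) < e"
proof -
  obtain G C where G: "finite G" "G \<subseteq> P" "C \<ge> 0" "\<And>t x. p (\<alpha> t x) \<le> C * (\<Sum>q\<in>G. q x)"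
    using action_equicontinuous[OF p] by blast
  have "((\<lambda>h. C * (\<Sum>q\<in>G. q (\<alpha> h x - x))) \<longlongrightarrow> C * (\<Sum>q\<in>G. 0)) (at 0)"
    using G(2) by (intro tendsto_mult tendsto_sum Topological_Spaces.tendsto_const
        tendsto_seminorm_zero[OF tendsto_orbit_0]) auto
  then have "eventually (\<lambda>h. C * (\<Sum>q\<in>G. q (\<alpha> h x - x)) < e) (at 0)"
    using e by (intro order_tendstoD(2)) auto
  then obtain d where d: "d > 0" "\<And>h. h \<noteq> 0 \<Longrightarrow> \<bar>h\<bar> < d \<Longrightarrow> C * (\<Sum>q\<in>G. q (\<alpha> h x - x)) < e"
    unfolding eventually_at by (auto simp: dist_real_def)
  show ?thesis
  proof (rule that[OF d(1)])
    fix s t :: real assume st: "\<bar>s - t\<bar> < d"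
    show "p (\<alpha> s x - \<alpha> t x) < e"
    proof (cases "s = t")
      case False
      have "p (\<alpha> s x - \<alpha> t x) = p (\<alpha> t (\<alpha> (s - t) x - x))"
        by (simp add: action_diff action_action)
      also have "\<dots> \<le> C * (\<Sum>q\<in>G. q (\<alpha> (s - t) x - x))" by (rule G(4))
      also have "\<dots> < e" using d(2)[of "s - t"] False st by simp
      finally show ?thesis .
    qed (use e seminorm_zero[OF p] in simp)
  qed
qed

text \<open>The integral \<open>\<integral>\<^sub>0\<^sup>1 w t \<alpha>\<^sub>t x dt\<close>, as the limit of its uniform Riemann sums.\<close>
definition weighted_mean :: "(real \<Rightarrow> real) \<Rightarrow> 'a \<Rightarrow> 'a" where
  "weighted_mean w x = seq_limit (riemann_sum (\<lambda>t. w t *\<^sub>R \<alpha> t x))"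

abbreviation average :: "'a \<Rightarrow> 'a" where
  "average \<equiv> weighted_mean (\<lambda>_. 1)"

abbreviation moment :: "'a \<Rightarrow> 'a" where
  "moment \<equiv> weighted_mean (\<lambda>t. t)"

lemma tendsto_weighted_mean:
  assumes w: "weight w"
  shows "riemann_sum (\<lambda>t. w t *\<^sub>R \<alpha> t x) \<longlonglongrightarrow> weighted_mean w x"
  unfolding weighted_mean_def
proof (intro tendsto_seq_limit riemann_sum_convergent)
  fix p and e :: real assume p: "p \<in> P" and e: "e > 0"
  obtain B where B: "B \<ge> 0" "\<And>t. p (\<alpha> t x) \<le> B" using orbit_bounded[OF p] by blast
  obtain d1 where d1: "d1 > 0" "\<And>s t. \<bar>s - t\<bar> < d1 \<Longrightarrow> p (\<alpha> s x - \<alpha> t x) < e / 2"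
    using orbit_uniformly_continuous[OF p, of "e / 2"] e by auto
  have ew: "e / (2 * (B + 1)) > 0" using e B(1) by simp
  then obtain d2 where d2: "d2 > 0"
    "\<forall>t\<in>{0..1}. \<forall>s\<in>{0..1}. dist s t < d2 \<longrightarrow> dist (w s) (w t) < e / (2 * (B + 1))"
    using w unfolding weight_def uniformly_continuous_on_def by blast
  show "\<exists>d>0. \<forall>s\<in>{0..1}. \<forall>t\<in>{0..1}. \<bar>s - t\<bar> < d \<longrightarrow> p (w s *\<^sub>R \<alpha> s x - w t *\<^sub>R \<alpha> t x) < e"
  proof (intro exI[of _ "min d1 d2"] conjI ballI impI)
    fix s t assume st: "s \<in> {0..1}" "t \<in> {0..1}" "\<bar>s - t\<bar> < min d1 d2"
    have "w s *\<^sub>R \<alpha> s x - w t *\<^sub>R \<alpha> t x = w s *\<^sub>R (\<alpha> s x - \<alpha> t x) + (w s - w t) *\<^sub>R \<alpha> t x"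
      by (simp add: algebra_simps)
    then have "p (w s *\<^sub>R \<alpha> s x - w t *\<^sub>R \<alpha> t x) \<le> \<bar>w s\<bar> * p (\<alpha> s x - \<alpha> t x) + \<bar>w s - w t\<bar> * p (\<alpha> t x)"
      using seminorm_add[OF p, of "w s *\<^sub>R (\<alpha> s x - \<alpha> t x)" "(w s - w t) *\<^sub>R \<alpha> t x"]
      by (simp add: seminorm_scaleR[OF p])
    also have "\<dots> \<le> 1 * p (\<alpha> s x - \<alpha> t x) + (e / (2 * (B + 1))) * B"
    proof (intro add_mono mult_mono)
      show "\<bar>w s - w t\<bar> \<le> e / (2 * (B + 1))"
        using d2(2) st unfolding dist_real_def by (meson less_imp_le min_less_iff_conj)
      show "\<bar>w s\<bar> \<le> 1" using w st unfolding weight_def by blast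
    qed (use ew B seminorm_nonneg[OF p] in auto)
    also have "\<dots> < e / 2 + e / 2"
    proof (rule add_less_le_mono)
      show "1 * p (\<alpha> s x - \<alpha> t x) < e / 2" using d1(2) st by simp
      show "e / (2 * (B + 1)) * B \<le> e / 2" using B e by (simp add: field_simps)
    qed
    finally show "p (w s *\<^sub>R \<alpha> s x - w t *\<^sub>R \<alpha> t x) < e" by simp
  qed (use d1 d2 in simp)
qed

lemma weighted_mean_add:
  assumes w: "weight w"
  shows "weighted_mean w (x + y) = weighted_mean w x + weighted_mean w y"
proof -
  have "riemann_sum (\<lambda>t. w t *\<^sub>R \<alpha> t (x + y))
      = (\<lambda>M. riemann_sum (\<lambda>t. w t *\<^sub>R \<alpha> t x) M + riemann_sum (\<lambda>t. w t *\<^sub>R \<alpha> t y) M)"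
    by (simp add: fun_eq_iff riemann_sum_def action_add sum.distrib scaleR_add_right)
  then show ?thesis
    using tendsto_add[OF tendsto_weighted_mean[OF w, of x] tendsto_weighted_mean[OF w, of y]]
    unfolding weighted_mean_def[of w "x + y"] by (simp add: seq_limit_eq)
qed

lemma weighted_mean_cs:
  assumes w: "weight w"
  shows "weighted_mean w (cs c x) = cs c (weighted_mean w x)"
proof -
  have "riemann_sum (\<lambda>t. w t *\<^sub>R \<alpha> t (cs c x)) = (\<lambda>M. cs c (riemann_sum (\<lambda>t. w t *\<^sub>R \<alpha> t x) M))"
    by (simp add: fun_eq_iff riemann_sum_def action_cs cs_sum cs_scaleR_commute)
  then show ?thesis
    using tendsto_cs[OF tendsto_weighted_mean[OF w, of x], of c]
    unfolding weighted_mean_def[of w "cs c x"] by (simp add: seq_limit_eq)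
qed

lemma weighted_mean_diff:
  assumes w: "weight w"
  shows "weighted_mean w (x - y) = weighted_mean w x - weighted_mean w y"
  using weighted_mean_add[OF w, of x "- y"] weighted_mean_cs[OF w, of "complex_of_real (- 1)" y, unfolded cs_of_real]
  by simp

lemma seminorm_weighted_riemann_sum_le:
  assumes w: "weight w" and p: "p \<in> P" and B: "\<And>t. p (\<alpha> t x) \<le> B" "B \<ge> 0"
  shows "p (riemann_sum (\<lambda>t. w t *\<^sub>R \<alpha> t x) M) \<le> B"
proof (cases "M = 0")
  case False
  define f where "f k = w (real k / real M) *\<^sub>R \<alpha> (real k / real M) x" for k
  have f: "p (f k) \<le> B" if "k < M" for k
  proof -
    have "\<bar>w (real k / real M)\<bar> \<le> 1"
      using w that unfolding weight_def by auto
    then have "\<bar>w (real k / real M)\<bar> * p (\<alpha> (real k / real M) x) \<le> 1 * B"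
      using B seminorm_nonneg[OF p] by (intro mult_mono) auto
    then show ?thesis unfolding f_def by (simp add: seminorm_scaleR[OF p])
  qed
  have "p (\<Sum>k<M. f k) \<le> (\<Sum>k<M. p (f k))" by (rule seminorm_sum[OF p])
  also have "\<dots> \<le> (\<Sum>k<M. B)" using f by (intro sum_mono) simp
  finally have "p (\<Sum>k<M. f k) \<le> real M * B" by simp
  then show ?thesis
    unfolding riemann_sum_def f_def[symmetric] using False by (simp add: seminorm_scaleR[OF p] field_simps)
qed (simp add: riemann_sum_def B seminorm_zero[OF p])

lemma seminorm_bounded_weighted_mean:
  assumes w: "weight w"
  shows "seminorm_bounded (weighted_mean w)"
  unfolding seminorm_bounded_def
proof
  fix p assume p: "p \<in> P"
  obtain G C where G: "finite G" "G \<subseteq> P" "C \<ge> 0" "\<And>t x. p (\<alpha> t x) \<le> C * (\<Sum>q\<in>G. q x)"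
    using action_equicontinuous[OF p] by blast
  have "p (weighted_mean w x - 0) \<le> C * (\<Sum>q\<in>G. q x)" for x
  proof (rule seminorm_limit_le[OF tendsto_weighted_mean[OF w] _ p])
    have "C * (\<Sum>q\<in>G. q x) \<ge> 0"
      using G(2,3) seminorm_sum_nonneg by simp
    then show "\<forall>\<^sub>F M in sequentially. p (riemann_sum (\<lambda>t. w t *\<^sub>R \<alpha> t x) M - 0) \<le> C * (\<Sum>q\<in>G. q x)"
      using seminorm_weighted_riemann_sum_le[OF w p G(4)] by simp
  qed simp
  then show "\<exists>G C. finite G \<and> G \<subseteq> P \<and> (\<forall>x. p (weighted_mean w x) \<le> C * (\<Sum>q\<in>G. q x))"
    using G(1,2) by auto
qed

lemma continuous_on_weighted_mean: "weight w \<Longrightarrow> continuous_on UNIV (weighted_mean w)"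
  by (intro continuous_on_seminorm_bounded weighted_mean_add seminorm_bounded_weighted_mean)

end

section \<open>Invariance of the average and the moment identity\<close>

lemma sum_periodic_shift:
  fixes a :: "nat \<Rightarrow> 'b::cancel_comm_monoid_add"
  assumes per: "\<And>j. a (j + M) = a j"
  shows "(\<Sum>k<M. a (k + m)) = (\<Sum>k<M. a k)"
proof (induction m)
  case (Suc m)
  have "(\<Sum>k<Suc M. a (k + m)) = (\<Sum>k<M. a (k + m)) + a m"
    using per[of m] by (simp add: add.commute)
  moreover have "(\<Sum>k<Suc M. a (k + m)) = a m + (\<Sum>k<M. a (k + Suc m))"
    unfolding sum.lessThan_Suc_shift by simp
  ultimately show ?case using Suc by (simp add: add.commute)
qed simp

text \<open>Discrete integration by parts for the first moment of a periodic sequence.\<close>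
lemma sum_weighted_periodic_shift:
  fixes a :: "nat \<Rightarrow> 'b::real_vector"
  assumes per: "\<And>j. a (j + M) = a j"
  shows "(\<Sum>k<M. real k *\<^sub>R a (k + m)) =
         (\<Sum>k<M. real k *\<^sub>R a k) - real m *\<^sub>R (\<Sum>k<M. a k) + real M *\<^sub>R (\<Sum>k<m. a k)"
proof (induction m)
  case (Suc m)
  have "(\<Sum>k<M. real k *\<^sub>R a (k + m)) + real M *\<^sub>R a m = (\<Sum>k<Suc M. real k *\<^sub>R a (k + m))"
    using per[of m] by (simp add: add.commute)
  also have "\<dots> = (\<Sum>k<M. real k *\<^sub>R a (k + Suc m)) + (\<Sum>k<M. a (k + Suc m))"
    unfolding sum.lessThan_Suc_shift by (simp add: scaleR_add_left sum.distrib)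
  also have "(\<Sum>k<M. a (k + Suc m)) = (\<Sum>k<M. a k)"
    by (rule sum_periodic_shift[where a = a and M = M, OF per])
  finally show ?case using Suc by (simp add: algebra_simps)
qed simp

lemma Suc_div_mult_Suc: "real (Suc n) / real (N * Suc n) = 1 / real N"
  by (simp only: of_nat_mult) (simp del: of_nat_Suc)

lemma mult_div_mult_Suc: "N > 0 \<Longrightarrow> real N / real (N * Suc n) = 1 / real (Suc n)"
  by (simp only: of_nat_mult) (simp del: of_nat_Suc)

context periodic_action
begin

lemma orbit_sample_shift:
  assumes "M > 0"
  shows "\<alpha> (real m / real M) (\<alpha> (real k / real M) x) = \<alpha> (real (k + m) / real M) x"
  using assms by (simp add: action_action add_divide_distrib add.commute)

lemma orbit_sample_periodic:
  assumes "M > 0"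
  shows "\<alpha> (real (j + M) / real M) x = \<alpha> (real j / real M) x"
proof -
  have "real (j + M) / real M = real j / real M + 1" using assms by (simp add: field_simps)
  then show ?thesis by (simp add: action_periodic)
qed

lemma riemann_sum_average_invariant:
  assumes "M > 0"
  shows "\<alpha> (real m / real M) (riemann_sum (\<lambda>t. 1 *\<^sub>R \<alpha> t x) M) = riemann_sum (\<lambda>t. 1 *\<^sub>R \<alpha> t x) M"
  using sum_periodic_shift[of "\<lambda>k. \<alpha> (real k / real M) x", OF orbit_sample_periodic[OF assms]]
  unfolding riemann_sum_def by (simp add: action_scaleR action_sum orbit_sample_shift[OF assms])

lemma riemann_sum_moment_shift:
  assumes "M > 0"
  shows "\<alpha> (real m / real M) (riemann_sum (\<lambda>t. t *\<^sub>R \<alpha> t x) M) - riemann_sum (\<lambda>t. t *\<^sub>R \<alpha> t x) M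
      + (real m / real M) *\<^sub>R riemann_sum (\<lambda>t. 1 *\<^sub>R \<alpha> t x) M
    = (1 / real M) *\<^sub>R (\<Sum>k<m. \<alpha> (real k / real M) x)"
proof -
  define S0 where "S0 = (\<Sum>k<M. \<alpha> (real k / real M) x)"
  define S1 where "S1 = (\<Sum>k<M. real k *\<^sub>R \<alpha> (real k / real M) x)"
  define S2 where "S2 = (\<Sum>k<m. \<alpha> (real k / real M) x)"
  have moment: "riemann_sum (\<lambda>t. t *\<^sub>R \<alpha> t x) M = (1 / real M ^ 2) *\<^sub>R S1"
    unfolding riemann_sum_def S1_def by (simp add: scaleR_sum_right power2_eq_square)
  have shift: "\<alpha> (real m / real M) S1 = S1 - real m *\<^sub>R S0 + real M *\<^sub>R S2"
    using sum_weighted_periodic_shift[of "\<lambda>k. \<alpha> (real k / real M) x", OF orbit_sample_periodic[OF assms]]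
    unfolding S0_def S1_def S2_def by (simp add: action_scaleR action_sum orbit_sample_shift[OF assms])
  then have "\<alpha> (real m / real M) (riemann_sum (\<lambda>t. t *\<^sub>R \<alpha> t x) M) - riemann_sum (\<lambda>t. t *\<^sub>R \<alpha> t x) M
      = (1 / real M ^ 2) *\<^sub>R (real M *\<^sub>R S2 - real m *\<^sub>R S0)"
    unfolding moment action_scaleR shift by (simp add: algebra_simps)
  moreover have "riemann_sum (\<lambda>t. 1 *\<^sub>R \<alpha> t x) M = (1 / real M) *\<^sub>R S0"
    unfolding riemann_sum_def S0_def by simp
  ultimately show ?thesis
    unfolding S2_def[symmetric] using assms by (simp add: algebra_simps power2_eq_square)
qed

lemma tendsto_weighted_mean_multiples:
  assumes "weight w" "N > 0"
  shows "(\<lambda>n. riemann_sum (\<lambda>t. w t *\<^sub>R \<alpha> t x) (N * Suc n)) \<longlonglongrightarrow> weighted_mean w x"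
proof -
  have "strict_mono (\<lambda>n. N * Suc n)" using assms(2) unfolding strict_mono_Suc_iff by simp
  then show ?thesis
    using LIMSEQ_subseq_LIMSEQ[OF tendsto_weighted_mean[OF assms(1)]] by (simp add: comp_def)
qed

lemma average_invariant:
  assumes N: "N > 0"
  shows "\<alpha> (1 / real N) (average x) = average x"
proof -
  have "\<alpha> (1 / real N) (riemann_sum (\<lambda>t. 1 *\<^sub>R \<alpha> t x) (N * Suc n)) = riemann_sum (\<lambda>t. 1 *\<^sub>R \<alpha> t x) (N * Suc n)" for n
    using riemann_sum_average_invariant[of "N * Suc n" "Suc n" x, unfolded Suc_div_mult_Suc] N by simp
  then show ?thesis
    using tendsto_action[OF tendsto_weighted_mean_multiples[OF weight_const N, of x], of "1 / real N"]
      tendsto_weighted_mean_multiples[OF weight_const N, of x]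
    by (intro tendsto_unique[of _ _ sequentially]) simp_all
qed

text \<open>\<open>\<alpha>\<^sub>h (moment x) - moment x + h average x = \<integral>\<^sub>0\<^sup>h \<alpha>\<^sub>t x dt\<close> for \<open>h = 1 / N\<close>, computed
  along the partitions into \<open>N * Suc n\<close> intervals.\<close>
lemma moment_shift_eq_limit:
  assumes N: "N > 0"
  shows "(\<lambda>n. (1 / real (N * Suc n)) *\<^sub>R (\<Sum>k<Suc n. \<alpha> (real k / real (N * Suc n)) x))
    \<longlonglongrightarrow> \<alpha> (1 / real N) (moment x) - moment x + (1 / real N) *\<^sub>R average x"
proof -
  have eq: "(1 / real (N * Suc n)) *\<^sub>R (\<Sum>k<Suc n. \<alpha> (real k / real (N * Suc n)) x)
      = \<alpha> (1 / real N) (riemann_sum (\<lambda>t. t *\<^sub>R \<alpha> t x) (N * Suc n)) - riemann_sum (\<lambda>t. t *\<^sub>R \<alpha> t x) (N * Suc n)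
        + (1 / real N) *\<^sub>R riemann_sum (\<lambda>t. 1 *\<^sub>R \<alpha> t x) (N * Suc n)" for n
    using riemann_sum_moment_shift[of "N * Suc n" "Suc n" x, unfolded Suc_div_mult_Suc] N by simp
  show ?thesis
    unfolding eq
    by (intro tendsto_add tendsto_diff tendsto_scaleR_const tendsto_action
        tendsto_weighted_mean_multiples weight_const weight_id N)
qed

lemma seminorm_scaled_moment_shift_le:
  assumes p: "p \<in> P" and N: "N > 0" and d: "1 / real N \<le> d"
    and close: "\<And>h. 0 \<le> h \<Longrightarrow> h < d \<Longrightarrow> p (\<alpha> h x - x) \<le> e"
  shows "p (real N *\<^sub>R (\<alpha> (1 / real N) (moment x) - moment x + (1 / real N) *\<^sub>R average x) - x) \<le> e"
proof (rule seminorm_limit_le[OF tendsto_scaleR_const[OF moment_shift_eq_limit[OF N]] _ p])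
  show "\<forall>\<^sub>F n in sequentially.
      p (real N *\<^sub>R ((1 / real (N * Suc n)) *\<^sub>R (\<Sum>k<Suc n. \<alpha> (real k / real (N * Suc n)) x)) - x) \<le> e"
  proof (intro always_eventually allI)
    fix n
    define h where "h k = real k / real (N * Suc n)" for k
    have "real N *\<^sub>R ((1 / real (N * Suc n)) *\<^sub>R (\<Sum>k<Suc n. \<alpha> (h k) x))
        = (1 / real (Suc n)) *\<^sub>R (\<Sum>k<Suc n. \<alpha> (h k) x)"
      by (simp only: scaleR_scaleR times_divide_eq_right mult_1_right mult_div_mult_Suc[OF N])
    also have "\<dots> = (1 / real (Suc n)) *\<^sub>R (\<Sum>k<Suc n. \<alpha> (h k) x - x) + x"
      by (simp add: sum_subtractf scaleR_diff_right sum_constant_scaleR)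
    finally have eq: "real N *\<^sub>R ((1 / real (N * Suc n)) *\<^sub>R (\<Sum>k<Suc n. \<alpha> (h k) x)) - x
        = (1 / real (Suc n)) *\<^sub>R (\<Sum>k<Suc n. \<alpha> (h k) x - x)"
      by simp
    have "p (\<alpha> (h k) x - x) \<le> e" if "k < Suc n" for k
    proof (rule close)
      have "0 < real (N * Suc n)" using N by (simp only: of_nat_0_less_iff) simp
      then have "h k < real (Suc n) / real (N * Suc n)"
        unfolding h_def using that by (intro divide_strict_right_mono) auto
      also have "\<dots> = 1 / real N" by (rule Suc_div_mult_Suc)
      finally show "h k < d" using d by simp
    qed (simp add: h_def)
    then have "p (\<Sum>k<Suc n. \<alpha> (h k) x - x) \<le> (\<Sum>k<Suc n. e)"
      by (intro order_trans[OF seminorm_sum[OF p]] sum_mono) simp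
    then show "p (real N *\<^sub>R ((1 / real (N * Suc n)) *\<^sub>R (\<Sum>k<Suc n. \<alpha> (h k) x)) - x) \<le> e"
      unfolding eq seminorm_scaleR[OF p] by (simp add: field_simps del: of_nat_Suc)
  qed
qed simp

lemma moment_difference_quotient:
  "(\<lambda>N. real (Suc N) *\<^sub>R (\<alpha> (1 / real (Suc N)) (moment x) - moment x)) \<longlonglongrightarrow> x - average x"
proof -
  define W where "W N = \<alpha> (1 / real N) (moment x) - moment x + (1 / real N) *\<^sub>R average x" for N
  have "(\<lambda>N. real (Suc N) *\<^sub>R W (Suc N)) \<longlonglongrightarrow> x"
  proof (rule tendsto_seminormI)
    fix p and e :: real assume p: "p \<in> P" and e: "e > 0"
    obtain d where d: "d > 0" "\<And>s t. \<bar>s - t\<bar> < d \<Longrightarrow> p (\<alpha> s x - \<alpha> t x) < e"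
      using orbit_uniformly_continuous[OF p e] by blast
    have close: "p (\<alpha> h x - x) \<le> e" if "0 \<le> h" "h < d" for h
      using d(2)[of h 0] that by (simp add: action_0)
    obtain N0 :: nat where N0: "1 / d < real N0" using reals_Archimedean2 by blast
    have "p (real (Suc N) *\<^sub>R W (Suc N) - x) \<le> e" if "N0 \<le> N" for N
    proof -
      have "1 / d < real (Suc N)" using N0 that by linarith
      then have "1 / real (Suc N) \<le> d" using d(1) by (simp add: field_simps)
      then show ?thesis
        unfolding W_def by (intro seminorm_scaled_moment_shift_le[OF p] close) auto
    qed
    then show "eventually (\<lambda>N. p (real (Suc N) *\<^sub>R W (Suc N) - x) \<le> e) sequentially"
      unfolding eventually_sequentially by blast
  qed
  moreover have "real (Suc N) *\<^sub>R (\<alpha> (1 / real (Suc N)) (moment x) - moment x)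
      = real (Suc N) *\<^sub>R W (Suc N) - average x" for N
    unfolding W_def by (simp add: algebra_simps)
  ultimately show ?thesis
    by (simp add: tendsto_diff[OF _ tendsto_const])
qed

end

section \<open>The cokernel and Bastiani smoothness\<close>

lemma coset_eq_iff:
  assumes add: "\<And>x y. D (x + y) = D x + D y"
  shows "coset D x = coset D y \<longleftrightarrow> x - y \<in> range D"
proof
  have D0: "D 0 = 0" using add[of 0 0] by simp
  assume "coset D x = coset D y"
  moreover have "x \<in> coset D x" unfolding coset_def using D0 by (metis add.right_neutral rangeI image_eqI)
  ultimately obtain u where "x = y + D u" unfolding coset_def by auto
  then show "x - y \<in> range D" by simp
next
  assume "x - y \<in> range D"
  then obtain w where w: "x = y + D w" by (metis diff_add_cancel add.commute rangeE)
  have in_coset: "z + D v \<in> coset D z" for z v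
    unfolding coset_def by (intro imageI rangeI)
  have "x + D u = y + D (w + u)" "y + D u = x + D (u - w)" for u
    using w add[of w u] add[of "u - w" w] by (simp_all add: add.assoc)
  then have "x + D u \<in> coset D y" "y + D u \<in> coset D x" for u
    using in_coset by metis+
  then show "coset D x = coset D y"
    unfolding coset_def[of D x] coset_def[of D y] by blast
qed

lemma openin_coker_topology:
  "openin (coker_topology D) S \<longleftrightarrow> S \<subseteq> range (coset D) \<and> open {x. coset D x \<in> S}"
proof -
  have "istopology (\<lambda>S. S \<subseteq> range (coset D) \<and> open {x. coset D x \<in> S})"
    unfolding istopology_def
  proof (rule conjI; intro allI impI)
    fix S T :: "'a set set"
    assume "S \<subseteq> range (coset D) \<and> open {x. coset D x \<in> S}" "T \<subseteq> range (coset D) \<and> open {x. coset D x \<in> T}"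
    moreover have "{x. coset D x \<in> S \<inter> T} = {x. coset D x \<in> S} \<inter> {x. coset D x \<in> T}" by auto
    ultimately show "S \<inter> T \<subseteq> range (coset D) \<and> open {x. coset D x \<in> S \<inter> T}" by auto
  next
    fix K :: "'a set set set" assume K: "\<forall>S\<in>K. S \<subseteq> range (coset D) \<and> open {x. coset D x \<in> S}"
    have "{x. coset D x \<in> \<Union>K} = (\<Union>S\<in>K. {x. coset D x \<in> S})" by auto
    then show "\<Union>K \<subseteq> range (coset D) \<and> open {x. coset D x \<in> \<Union>K}"
      using K by (auto intro: open_UN)
  qed
  then show ?thesis unfolding coker_topology_def by simp
qed

lemma continuous_map_coker_topology:
  assumes f: "continuous_on UNIV f" and g: "\<And>x. g (coset D x) = f x"
  shows "continuous_map (coker_topology D) euclidean g"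
proof -
  have top: "topspace (coker_topology D) = range (coset D)"
    unfolding topspace_def openin_coker_topology by auto
  show ?thesis
    unfolding continuous_map_def
  proof (intro conjI allI impI)
    fix U :: "'b set" assume "openin euclidean U"
    then have "open (f -` U)" using f by (simp add: open_vimage)
    moreover have "{x. coset D x \<in> {S \<in> topspace (coker_topology D). g S \<in> U}} = f -` U"
      unfolding top by (auto simp: g)
    ultimately show "openin (coker_topology D) {S \<in> topspace (coker_topology D). g S \<in> U}"
      unfolding openin_coker_topology top by auto
  qed simp
qed

lemma bastiani_smooth_continuous:
  fixes f :: "'a::{real_vector,topological_space} \<Rightarrow> 'b::{real_vector,topological_space}"
  assumes "bastiani_smooth f"
  shows "continuous_on UNIV f"
proof -
  obtain d :: "nat \<Rightarrow> 'a \<Rightarrow> (nat \<Rightarrow> 'a) \<Rightarrow> 'b" where d0: "\<And>x vs. d 0 x vs = f x" and cont: "\<And>k. continuous_on UNIV (\<lambda>z. d k (fst z) (snd z))"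
    using assms unfolding bastiani_smooth_def by blast
  have "continuous_on UNIV (\<lambda>x. d 0 (fst (x, vs)) (snd (x, vs)))" for vs
    using continuous_on_compose[OF continuous_on_Pair[OF continuous_on_id continuous_on_const]
        continuous_on_subset[OF cont]] by (simp add: comp_def)
  then show ?thesis by (simp add: d0)
qed

lemma bastiani_smooth_dir_deriv:
  fixes f :: "'a::{real_vector,topological_space} \<Rightarrow> 'b::{real_vector,topological_space}"
  assumes "bastiani_smooth f"
  obtains f' where "continuous_on UNIV f'" "\<And>x. dir_deriv f x v (f' x)"
proof -
  obtain d :: "nat \<Rightarrow> 'a \<Rightarrow> (nat \<Rightarrow> 'a) \<Rightarrow> 'b" where d0: "\<And>x vs. d 0 x vs = f x"
    and dd: "\<And>k x vs. dir_deriv (\<lambda>y. d k y vs) x (vs k) (d (Suc k) x vs)"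
    and cont: "\<And>k. continuous_on UNIV (\<lambda>z. d k (fst z) (snd z))"
    using assms unfolding bastiani_smooth_def by blast
  have "continuous_on UNIV (\<lambda>x. d 1 (fst (x, \<lambda>_::nat. v)) (snd (x, \<lambda>_::nat. v)))"
    using continuous_on_compose[OF continuous_on_Pair[OF continuous_on_id continuous_on_const]
        continuous_on_subset[OF cont]] by (simp add: comp_def)
  moreover have "dir_deriv f x v (d 1 x (\<lambda>_. v))" for x
    using dd[where k = 0 and x = x and vs = "\<lambda>_. v"] by (simp add: d0)
  ultimately show ?thesis by (intro that[of "\<lambda>x. d 1 x (\<lambda>_. v)"]) simp_all
qed

context periodic_action
begin

lemma continuous_generator_if_smooth:
  assumes smooth: "bastiani_smooth (\<lambda>z::real \<times> 'a. \<alpha> (fst z) (snd z))"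
    and generator: "\<And>x. ((\<lambda>t. (1 / t) *\<^sub>R (\<alpha> t x - x)) \<longlongrightarrow> D x) (at 0)"
  shows "continuous_on UNIV D"
proof -
  obtain f' where f': "continuous_on UNIV f'" "\<And>z. dir_deriv (\<lambda>z. \<alpha> (fst z) (snd z)) z (1, 0) (f' z)"
    using bastiani_smooth_dir_deriv[OF smooth] by blast
  have "((\<lambda>t. (1 / t) *\<^sub>R (\<alpha> t x - x)) \<longlongrightarrow> f' (0, x)) (at 0)" for x
    using f'(2)[of "(0, x)"] unfolding dir_deriv_def by (simp add: action_0)
  then have "D = (\<lambda>x. f' (0, x))"
    using generator tendsto_unique[OF generator] by (simp add: fun_eq_iff)
  moreover have "continuous_on UNIV (\<lambda>x. f' (0::real, x))"
    using continuous_on_compose[OF continuous_on_Pair[OF continuous_on_const continuous_on_id]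
        continuous_on_subset[OF f'(1)]] by (simp add: comp_def)
  ultimately show ?thesis by simp
qed

end

locale periodic_action_generator = periodic_action cs P \<alpha>
  for cs :: "complex \<Rightarrow> 'a::{real_vector,topological_space} \<Rightarrow> 'a" and P \<alpha> +
  fixes D :: "'a \<Rightarrow> 'a"
  assumes generator: "((\<lambda>t. (1 / t) *\<^sub>R (\<alpha> t x - x)) \<longlongrightarrow> D x) (at 0)"
    and continuous_generator: "continuous_on UNIV D"
begin

lemma generator_unique: "((\<lambda>t. (1 / t) *\<^sub>R (\<alpha> t x - x)) \<longlongrightarrow> y) (at 0) \<Longrightarrow> D x = y"
  using tendsto_unique[OF generator] by simp

lemma generator_add: "D (x + y) = D x + D y"
  using tendsto_add[OF generator[of x] generator[of y]]
  by (intro generator_unique) (simp add: action_add algebra_simps)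

lemma generator_cs: "D (cs c x) = cs c (D x)"
  using tendsto_cs[OF generator[of x], of c]
  by (intro generator_unique) (simp add: action_cs cs_diff cs_scaleR_commute)

lemma generator_scaleR: "D (r *\<^sub>R x) = r *\<^sub>R D x"
  using generator_cs[of "complex_of_real r" x] by (simp only: cs_of_real)

lemma generator_sum: "D (\<Sum>i\<in>A. f i) = (\<Sum>i\<in>A. D (f i))"
  using generator_scaleR[of 0 0]
  by (induction A rule: infinite_finite_induct) (simp_all add: generator_add)

lemma generator_action: "D (\<alpha> s x) = \<alpha> s (D x)"
  using tendsto_action[OF generator[of x], of s]
  by (intro generator_unique) (simp add: action_diff action_scaleR action_commute)

lemma generator_sequentially:
  "(\<lambda>N. real (Suc N) *\<^sub>R (\<alpha> (1 / real (Suc N)) x - x)) \<longlonglongrightarrow> D x"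
proof -
  have "filterlim (\<lambda>N. 1 / real (Suc N)) (at 0) sequentially"
    unfolding filterlim_at using LIMSEQ_inverse_real_of_nat by (simp add: inverse_eq_divide)
  from filterlim_compose[OF generator[of x] this] show ?thesis by simp
qed

lemma generator_moment: "D (moment x) = x - average x"
  using tendsto_unique[OF generator_sequentially moment_difference_quotient] by simp

lemma generator_average: "D (average x) = 0"
proof -
  have "(\<lambda>N. real (Suc N) *\<^sub>R (\<alpha> (1 / real (Suc N)) (average x) - average x)) \<longlonglongrightarrow> 0"
    using average_invariant[of "Suc _" x] by simp
  then show ?thesis using tendsto_unique[OF generator_sequentially] by simp
qed

lemma average_generator: "average (D x) = 0"
proof -
  have "riemann_sum (\<lambda>t. 1 *\<^sub>R \<alpha> t (D x)) = (\<lambda>M. D (riemann_sum (\<lambda>t. 1 *\<^sub>R \<alpha> t x) M))"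
    unfolding riemann_sum_def by (simp add: fun_eq_iff generator_scaleR generator_sum generator_action)
  then have "riemann_sum (\<lambda>t. 1 *\<^sub>R \<alpha> t (D x)) \<longlonglongrightarrow> D (average x)"
    using continuous_on_tendsto_compose[OF continuous_generator tendsto_weighted_mean[OF weight_const]]
    by simp
  then show ?thesis
    using tendsto_unique[OF tendsto_weighted_mean[OF weight_const]] generator_average by simp
qed

lemma range_generator: "range D = {x. average x = 0}"
proof
  show "{x. average x = 0} \<subseteq> range D"
  proof
    fix x assume "x \<in> {x. average x = 0}"
    then have "x = D (moment x)" using generator_moment[of x] by simp
    then show "x \<in> range D" by (rule range_eqI)
  qed
qed (auto simp: average_generator)

lemma closed_range_generator: "closed (range D)"
proof -
  have "- range D = average -` (- {0})" unfolding range_generator by auto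
  then show ?thesis
    unfolding closed_def
    using open_vimage[OF open_nonzero continuous_on_weighted_mean[OF weight_const]] by simp
qed

lemma coset_average: "coset D (average x) = coset D x"
proof -
  have "average x - x = D (- moment x)"
    using generator_moment[of x] generator_scaleR[of "- 1" "moment x"] by simp
  then show ?thesis unfolding coset_eq_iff[OF generator_add] by (rule range_eqI)
qed

text \<open>\<open>SOME\<close> picks a representative of the coset; the average does not depend on the
  choice because it vanishes on \<open>range D\<close>.\<close>
definition coker_section :: "'a set \<Rightarrow> 'a" where
  "coker_section S = average (SOME x. coset D x = S)"

lemma coker_section_coset: "coker_section (coset D x) = average x"
proof -
  define z where "z = (SOME z. coset D z = coset D x)"
  have "coset D z = coset D x" unfolding z_def by (rule someI[of _ x]) simp
  then have "z - x \<in> range D" unfolding coset_eq_iff[OF generator_add] .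
  then have "average (z - x) = 0" unfolding range_generator by simp
  then show ?thesis
    unfolding coker_section_def z_def[symmetric] by (simp add: weighted_mean_diff[OF weight_const])
qed

lemma generator_derivation:
  assumes lie: "complex_lie_algebra cs b"
    and bracket_cont: "continuous_on UNIV (\<lambda>z. b (fst z) (snd z))"
    and hom: "\<And>t x y. \<alpha> t (b x y) = b (\<alpha> t x) (\<alpha> t y)"
  shows "D (b x y) = b (D x) y + b x (D y)"
proof -
  have lin1: "clinear_map cs (\<lambda>u. b u v)" and lin2: "clinear_map cs (b v)" for v
    using lie unfolding complex_lie_algebra_def by blast+
  have scale1: "b (r *\<^sub>R u) v = r *\<^sub>R b u v" and scale2: "b v (r *\<^sub>R u) = r *\<^sub>R b v u" for r u v
    using lin1[of v] lin2[of v] unfolding clinear_map_def by (metis cs_of_real)+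
  have diff1: "b (u - w) v = b u v - b w v" and diff2: "b v (u - w) = b v u - b v w" for u w v
    using lin1[of v] lin2[of v] scale1[of "- 1"] scale2[of _ "- 1"] unfolding clinear_map_def
    by (metis add_uminus_conv_diff scaleR_minus1_left)+
  have quotient: "(1 / h) *\<^sub>R (\<alpha> h (b x y) - b x y)
      = b ((1 / h) *\<^sub>R (\<alpha> h x - x)) (\<alpha> h y) + b x ((1 / h) *\<^sub>R (\<alpha> h y - y))" for h
    by (simp add: hom scale1 scale2 diff1 diff2 scaleR_diff_right)
  have "((\<lambda>h. b ((1 / h) *\<^sub>R (\<alpha> h x - x)) (\<alpha> h y)) \<longlongrightarrow> b (D x) y) (at 0)"
    using continuous_on_tendsto_compose[OF bracket_cont tendsto_Pair[OF generator tendsto_orbit_0]]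
    by simp
  moreover have "((\<lambda>h. b x ((1 / h) *\<^sub>R (\<alpha> h y - y))) \<longlongrightarrow> b x (D y)) (at 0)"
    using continuous_on_tendsto_compose[OF bracket_cont tendsto_Pair[OF tendsto_const generator]]
    by simp
  ultimately have "((\<lambda>h. (1 / h) *\<^sub>R (\<alpha> h (b x y) - b x y)) \<longlongrightarrow> b (D x) y + b x (D y)) (at 0)"
    unfolding quotient by (rule tendsto_add)
  then show ?thesis by (rule generator_unique)
qed

lemma admissible_generator:
  assumes "complex_lie_algebra cs b"
    and "continuous_on UNIV (\<lambda>z. b (fst z) (snd z))"
    and "\<And>t x y. \<alpha> t (b x y) = b (\<alpha> t x) (\<alpha> t y)"
  shows "admissible_derivation cs b D"
  unfolding admissible_derivation_def
proof (intro conjI allI)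
  show "clinear_map cs D" unfolding clinear_map_def using generator_add generator_cs by blast
  show "D (b x y) = b (D x) y + b x (D y)" for x y using generator_derivation[OF assms] .
  show "\<exists>I. (\<forall>y\<in>range D. \<forall>z\<in>range D. I (y + z) = I y + I z) \<and>
      (\<forall>c. \<forall>y\<in>range D. I (cs c y) = cs c (I y)) \<and>
      continuous_on (range D) I \<and> (\<forall>y\<in>range D. D (I y) = y)"
    using weighted_mean_add[OF weight_id] weighted_mean_cs[OF weight_id] generator_moment
      continuous_on_subset[OF continuous_on_weighted_mean[OF weight_id]] range_generator
    by (intro exI[of _ moment]) auto
  show "\<exists>\<sigma>. (\<forall>x y. \<sigma> (coset D (x + y)) = \<sigma> (coset D x) + \<sigma> (coset D y)) \<and>
      (\<forall>c x. \<sigma> (coset D (cs c x)) = cs c (\<sigma> (coset D x))) \<and>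
      continuous_map (coker_topology D) euclidean \<sigma> \<and>
      (\<forall>x. coset D (\<sigma> (coset D x)) = coset D x)"
    using weighted_mean_add[OF weight_const] weighted_mean_cs[OF weight_const] coset_average
      continuous_map_coker_topology[OF continuous_on_weighted_mean[OF weight_const] coker_section_coset]
    by (intro exI[of _ coker_section]) (simp add: coker_section_coset)
qed (use continuous_generator closed_range_generator in simp_all)

end

theorem proposition9p2:
  fixes cs :: "complex \<Rightarrow> 'a::{real_vector,topological_space} \<Rightarrow> 'a"
    and b :: "'a \<Rightarrow> 'a \<Rightarrow> 'a"
    and \<alpha> :: "real \<Rightarrow> 'a \<Rightarrow> 'a"
    and D :: "'a \<Rightarrow> 'a"
  assumes cvs: "cvs_structure cs"
    and lc: "\<exists>P. locally_convex cs P"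
    and complete: "tvs_complete TYPE('a)"
    and lie: "complex_lie_algebra cs b"
    and bracket_cont: "continuous_on UNIV (\<lambda>z. b (fst z) (snd z))"
    and aut: "\<forall>t. lie_aut cs b (\<alpha> t)"
    and act0: "\<alpha> 0 = id"
    and act_add: "\<forall>s t. \<alpha> (s + t) = \<alpha> s \<circ> \<alpha> t"
    and periodic: "\<forall>t. \<alpha> (t + 1) = \<alpha> t"
    and smooth: "bastiani_smooth (\<lambda>z::real \<times> 'a. \<alpha> (fst z) (snd z))"
    and D_def: "\<forall>x. ((\<lambda>t::real. (1 / t) *\<^sub>R (\<alpha> t x - x)) \<longlongrightarrow> D x) (at 0)"
  shows "admissible_derivation cs b D"
proof -
  obtain P where "locally_convex cs P" using lc by blast
  moreover have "clinear_map cs (\<alpha> t)" for t using aut unfolding lie_aut_def by blast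
  ultimately interpret periodic_action cs P \<alpha>
    using cvs complete act0 act_add periodic bastiani_smooth_continuous[OF smooth]
    by unfold_locales (simp_all add: clinear_map_def)
  interpret periodic_action_generator cs P \<alpha> D
    using D_def continuous_generator_if_smooth[OF smooth] by unfold_locales blast+
  show ?thesis
    using aut unfolding lie_aut_def by (intro admissible_generator lie bracket_cont) blast
qed

end
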